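(* Let $H$ be a discrete subgroup of the $\sigma$-compact locally compact (Hausdorff) group $G$, and let $\theta = \sum_{h\in H} c_h h \in \mathbb{C}H$. If $\sum_h c_h L_h f = 0$ for some nonzero $f \in L^2(G)$, then $\theta \ast k = 0$ for some nonzero $k \in \ell^2(H)$.
   Context: $L^2(G)$ is with respect to left Haar measure and $L_h f(x)=f(h^{-1}x)$. $\mathbb{C}H$ is the group ring of $H$ (finitely many nonzero $c_h$), and for $k=\sum_x b_x x\in\ell^2(H)$, $\theta\ast k=\sum_g\big(\sum_x c_{gx^{-1}}b_x\big)g$. *)

theory Defs
  imports "HOL-Analysis.Analysis"
begin

text \<open>The group G is the whole type 'g, written additively (group_add need not be
commutative); so the inverse of h is -h and L_h f (x) = f (-h + x).\<close>

definition sigma_compact_group :: "'g::topological_space itself \<Rightarrow> bool" where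
  "sigma_compact_group _ \<longleftrightarrow>
     (\<exists>K :: nat \<Rightarrow> 'g set. (\<forall>n. compact (K n)) \<and> (\<Union>n. K n) = UNIV)"

definition left_haar_measure :: "'g::{topological_group_add, t2_space} measure \<Rightarrow> bool" where
  "left_haar_measure M \<longleftrightarrow>
     sets M = sets borel \<and>
     (\<forall>K. compact K \<longrightarrow> emeasure M K < \<infinity>) \<and>
     (\<forall>A\<in>sets borel. emeasure M A = (INF U\<in>{U. open U \<and> A \<subseteq> U}. emeasure M U)) \<and>
     (\<forall>U. open U \<longrightarrow> emeasure M U = (SUP K\<in>{K. compact K \<and> K \<subseteq> U}. emeasure M K)) \<and>
     emeasure M (space M) \<noteq> 0 \<and>
     (\<forall>g. \<forall>A\<in>sets borel. emeasure M ((\<lambda>x. g + x) ` A) = emeasure M A)"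

definition discrete_subgroup :: "'g::topological_group_add set \<Rightarrow> bool" where
  "discrete_subgroup H \<longleftrightarrow>
     0 \<in> H \<and> (\<forall>x\<in>H. \<forall>y\<in>H. x + y \<in> H) \<and> (\<forall>x\<in>H. - x \<in> H) \<and>
     (\<forall>h\<in>H. \<exists>U. open U \<and> U \<inter> H = {h})"

definition in_L2 :: "'g measure \<Rightarrow> ('g \<Rightarrow> complex) \<Rightarrow> bool" where
  "in_L2 M f \<longleftrightarrow> f \<in> borel_measurable M \<and> integrable M (\<lambda>x. (cmod (f x))\<^sup>2)"

definition in_l2 :: "'g set \<Rightarrow> ('g \<Rightarrow> complex) \<Rightarrow> bool" where
  "in_l2 H k \<longleftrightarrow> (\<forall>x. x \<notin> H \<longrightarrow> k x = 0) \<and> (\<lambda>x. (cmod (k x))\<^sup>2) summable_on H"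

definition conv_gr :: "'g::group_add set \<Rightarrow> ('g \<Rightarrow> complex) \<Rightarrow> ('g \<Rightarrow> complex) \<Rightarrow> 'g \<Rightarrow> complex" where
  "conv_gr H c k g = (\<Sum>\<^sub>\<infinity>x\<in>H. c (g + - x) * k x)"

end

theory Submission imports Defs begin

(* Because H is discrete, every translate of a compact set C contains boundedly many points of H.
   Fubini and left invariance then give, for u = |f|^2,
     integral over t in C of (sum over h in H of u (h + t))  <=  m * integral of u  <  infinity,
   so for almost every t the function k_t(h) = f (h + t) on H lies in l^2(H). The relation
   sum_h c_h f (-h + x) = 0 holds for almost every x; as H is countable, for almost every t it
   holds at all x = g + t with g in H, and this says exactly theta * k_t = 0. Since f is not
   almost everywhere zero, some such t has k_t(0) = f t \<noteq> 0. *)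

lemma
  fixes H :: "'g::topological_group_add set"
  assumes "discrete_subgroup H"
  shows discrete_subgroup_zero: "0 \<in> H"
    and discrete_subgroup_add: "x \<in> H \<Longrightarrow> y \<in> H \<Longrightarrow> x + y \<in> H"
    and discrete_subgroup_minus: "x \<in> H \<Longrightarrow> - x \<in> H"
    and discrete_subgroup_isolated_zero: "\<exists>U. open U \<and> U \<inter> H = {0}"
  using assms unfolding discrete_subgroup_def by auto

lemma open_translate:
  fixes V :: "'g::topological_group_add set"
  assumes "open V"
  shows "open ((+) p ` V)"
proof -
  have "(+) p ` V = (\<lambda>x. - p + x) -` V"
    by (force simp: add.assoc[symmetric])
  moreover have "continuous_on UNIV (\<lambda>x::'g. - p + x)"
    by (intro continuous_intros)
  ultimately show ?thesis
    using assms by (simp add: open_vimage)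
qed

lemma discrete_subgroup_separating_nhd:
  fixes H :: "'g::topological_group_add set"
  assumes "discrete_subgroup H"
  obtains V where "open V" "0 \<in> V"
    "\<And>p a b. a \<in> V \<Longrightarrow> b \<in> V \<Longrightarrow> p + a \<in> H \<Longrightarrow> p + b \<in> H \<Longrightarrow> a = b"
proof -
  obtain U where U: "open U" "U \<inter> H = {0}"
    using discrete_subgroup_isolated_zero[OF assms] by blast
  have "open ((\<lambda>z::'g \<times> 'g. - fst z + snd z) -` U)"
    using U(1) by (intro open_vimage continuous_intros) auto
  moreover have "(0, 0) \<in> (\<lambda>z::'g \<times> 'g. - fst z + snd z) -` U"
    using U(2) by auto
  ultimately obtain A B where AB: "open A" "open B" "(0, 0) \<in> A \<times> B"
    "A \<times> B \<subseteq> (\<lambda>z::'g \<times> 'g. - fst z + snd z) -` U"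
    by (rule open_prod_elim)
  show ?thesis
  proof
    show "open (A \<inter> B)" "0 \<in> A \<inter> B"
      using AB by auto
  next
    fix p a b assume ab: "a \<in> A \<inter> B" "b \<in> A \<inter> B" "p + a \<in> H" "p + b \<in> H"
    have diff: "- (p + a) + (p + b) = - a + b"
      by (simp only: minus_add add.assoc minus_add_cancel)
    have "- a + b \<in> U"
      using ab(1,2) AB(4) by auto
    moreover have "- a + b \<in> H"
      unfolding diff[symmetric] using ab(3,4) assms
      by (simp add: discrete_subgroup_add discrete_subgroup_minus)
    ultimately have "- a + b = 0"
      using U(2) by blast
    then show "a = b"
      by (metis add.right_neutral add_minus_cancel)
  qed
qed

lemma discrete_subgroup_card_translate_bounded:
  fixes H C :: "'g::topological_group_add set"
  assumes "discrete_subgroup H" "compact C"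
  obtains m :: nat where "\<And>x. finite (H \<inter> (+) x ` C)" "\<And>x. card (H \<inter> (+) x ` C) \<le> m"
proof -
  obtain V where V: "open V" "0 \<in> V"
    and unique: "\<And>p a b. a \<in> V \<Longrightarrow> b \<in> V \<Longrightarrow> p + a \<in> H \<Longrightarrow> p + b \<in> H \<Longrightarrow> a = b"
    using discrete_subgroup_separating_nhd[OF assms(1)] by blast
  have "C \<subseteq> (\<Union>c\<in>C. (+) c ` V)"
    using V(2) by force
  then obtain P where P: "finite P" "C \<subseteq> (\<Union>p\<in>P. (+) p ` V)"
    using compactE_image[OF assms(2), of C "\<lambda>c. (+) c ` V"] open_translate[OF V(1)] by metis
  show ?thesis
  proof
    fix x
    have sub: "H \<inter> (+) x ` C \<subseteq> (\<Union>p\<in>P. H \<inter> (+) (x + p) ` V)"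
      using P(2) by (force simp: add.assoc)
    have single: "finite (H \<inter> (+) (x + p) ` V) \<and> card (H \<inter> (+) (x + p) ` V) \<le> 1" for p
    proof -
      have "H \<inter> (+) (x + p) ` V = {} \<or> (\<exists>a. H \<inter> (+) (x + p) ` V = {a})"
        using unique[of _ _ "x + p"] by blast
      then show ?thesis
        by auto
    qed
    have fin: "finite (\<Union>p\<in>P. H \<inter> (+) (x + p) ` V)"
      using P(1) single by blast
    then show "finite (H \<inter> (+) x ` C)"
      using sub by (rule finite_subset[rotated])
    have "card (H \<inter> (+) x ` C) \<le> card (\<Union>p\<in>P. H \<inter> (+) (x + p) ` V)"
      using sub fin by (rule card_mono[rotated])
    also have "\<dots> \<le> (\<Sum>p\<in>P. card (H \<inter> (+) (x + p) ` V))"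
      using P(1) by (rule card_UN_le)
    also have "\<dots> \<le> (\<Sum>p\<in>P. 1)"
      using single by (intro sum_mono) auto
    finally show "card (H \<inter> (+) x ` C) \<le> card P"
      by simp
  qed
qed

lemma sigma_compact_groupE:
  assumes "sigma_compact_group TYPE('g)"
  obtains K :: "nat \<Rightarrow> 'g::topological_space set" where "\<And>n. compact (K n)" "(\<Union>n. K n) = UNIV"
  using assms unfolding sigma_compact_group_def by blast

lemma countable_discrete_subgroup:
  fixes H :: "'g::topological_group_add set"
  assumes "sigma_compact_group TYPE('g)" "discrete_subgroup H"
  shows "countable H"
proof -
  obtain K :: "nat \<Rightarrow> 'g set" where K: "\<And>n. compact (K n)" "(\<Union>n. K n) = UNIV"
    using sigma_compact_groupE[OF assms(1)] by blast
  have "finite (H \<inter> K n)" for n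
  proof -
    obtain m :: nat where "\<And>x. finite (H \<inter> (+) x ` K n)"
      using discrete_subgroup_card_translate_bounded[OF assms(2) K(1)] by blast
    from this[of 0] show ?thesis
      by simp
  qed
  then have "countable (\<Union>n. H \<inter> K n)"
    by (intro countable_UN[OF countableI_type] countable_finite)
  moreover have "H = (\<Union>n. H \<inter> K n)"
    using K(2) by blast
  ultimately show ?thesis
    by simp
qed

lemma borel_measurable_translate [measurable]:
  "(+) g \<in> borel_measurable (borel :: 'g::topological_group_add measure)"
  by (intro borel_measurable_continuous_onI continuous_intros)

lemma borel_measurable_nn_integral_translates:
  fixes u :: "'g::topological_group_add \<Rightarrow> ennreal"
  assumes "countable H" and [measurable]: "u \<in> borel_measurable borel"
  shows "(\<lambda>t. \<integral>\<^sup>+ h. u (h + t) \<partial>count_space H) \<in> borel_measurable borel"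
proof -
  interpret sigma_finite_measure "count_space H"
    using sigma_finite_measure_count_space_countable[OF assms(1)] .
  have "(\<lambda>(h, t). u (h + t)) \<in> borel_measurable (count_space H \<Otimes>\<^sub>M borel)"
    by (rule measurable_pair_measure_countable1[OF assms(1)]) simp
  from measurable_pair_swap[OF this] show ?thesis
    by (intro borel_measurable_nn_integral) simp
qed

lemma in_l2I:
  assumes "\<And>x. x \<notin> H \<Longrightarrow> k x = 0"
    and "(\<integral>\<^sup>+ x. ennreal ((cmod (k x))\<^sup>2) \<partial>count_space H) < \<infinity>"
  shows "in_l2 H k"
proof -
  have "integrable (count_space H) (\<lambda>x. (cmod (k x))\<^sup>2)"
    using assms(2) by (simp add: integrable_iff_bounded)
  then have "(\<lambda>x. norm ((cmod (k x))\<^sup>2)) summable_on H"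
    using abs_summable_equivalent[of "\<lambda>x. (cmod (k x))\<^sup>2" H]
    by (simp add: Infinite_Set_Sum.abs_summable_on_def)
  then show ?thesis
    using assms(1) unfolding in_l2_def by simp
qed

lemma conv_gr_eq_sum:
  fixes c k :: "'g::group_add \<Rightarrow> complex"
  assumes fin: "finite {h. c h \<noteq> 0}" and sub: "(\<lambda>h. - h + g) ` {h. c h \<noteq> 0} \<subseteq> H"
  shows "conv_gr H c k g = (\<Sum>h | c h \<noteq> 0. c h * k (- h + g))"
proof -
  let ?S = "{h. c h \<noteq> 0}"
  have "conv_gr H c k g = (\<Sum>\<^sub>\<infinity>x\<in>(\<lambda>h. - h + g) ` ?S. c (g + - x) * k x)"
    unfolding conv_gr_def
  proof (rule infsum_cong_neutral)
    fix x assume x: "x \<in> H - (\<lambda>h. - h + g) ` ?S"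
    have "x = - (g + - x) + g"
      by (simp add: minus_add add.assoc)
    with x have "c (g + - x) = 0"
      by blast
    then show "c (g + - x) * k x = 0"
      by simp
  qed (use sub in auto)
  also have "\<dots> = (\<Sum>x\<in>(\<lambda>h. - h + g) ` ?S. c (g + - x) * k x)"
    using fin by simp
  also have "\<dots> = (\<Sum>h\<in>?S. c h * k (- h + g))"
  proof -
    have "g - (- h + g) = h" for h
      by (simp only: diff_conv_add_uminus minus_add minus_minus add_minus_cancel)
    then show ?thesis
      by (subst sum.reindex) (simp_all add: inj_on_def)
  qed
  finally show ?thesis .
qed

lemma conv_gr_translate_restriction:
  fixes c f :: "'g::topological_group_add \<Rightarrow> complex"
  assumes H: "discrete_subgroup H" and fin: "finite {h. c h \<noteq> 0}"
    and supp: "{h. c h \<noteq> 0} \<subseteq> H" and g: "g \<in> H"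
  shows "conv_gr H c (\<lambda>x. if x \<in> H then f (x + t) else 0) g = (\<Sum>h | c h \<noteq> 0. c h * f (- h + (g + t)))"
proof -
  have sub: "(\<lambda>h. - h + g) ` {h. c h \<noteq> 0} \<subseteq> H"
  proof (rule image_subsetI)
    fix h assume "h \<in> {h. c h \<noteq> 0}"
    with supp have "h \<in> H"
      by blast
    with H g show "- h + g \<in> H"
      by (simp add: discrete_subgroup_add discrete_subgroup_minus)
  qed
  then show ?thesis
    by (subst conv_gr_eq_sum[OF fin sub]) (auto intro!: sum.cong simp: add.assoc)
qed

context
  fixes M :: "'g::{topological_group_add, t2_space} measure"
  assumes haar: "left_haar_measure M"
begin

lemma sets_left_haar: "sets M = sets borel"
  using haar by (simp add: left_haar_measure_def)

lemma measurable_left_haar_iff: "measurable M N = measurable borel N"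
  using measurable_cong_sets[OF sets_left_haar refl] .

lemma space_left_haar: "space M = UNIV"
  using sets_eq_imp_space_eq[OF sets_left_haar] by simp

lemma emeasure_left_haar_compact: "compact K \<Longrightarrow> emeasure M K < \<infinity>"
  using haar by (simp add: left_haar_measure_def)

lemma emeasure_left_haar_translate: "A \<in> sets borel \<Longrightarrow> emeasure M ((+) g ` A) = emeasure M A"
  using haar by (simp add: left_haar_measure_def)

lemma measurable_left_haar_translate [measurable]: "(+) g \<in> measurable M M"
  unfolding measurable_cong_sets[OF sets_left_haar sets_left_haar]
  by (intro borel_measurable_continuous_onI continuous_intros)

lemma distr_left_haar_translate: "distr M M ((+) g) = M"
proof (rule measure_eqI)
  fix A assume "A \<in> sets (distr M M ((+) g))"
  then have A: "A \<in> sets borel"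
    by (simp add: sets_left_haar)
  have "(+) g -` A \<inter> space M = (+) (- g) ` A"
    unfolding space_left_haar by (force simp: add.assoc[symmetric])
  then show "emeasure (distr M M ((+) g)) A = emeasure M A"
    using A by (simp add: emeasure_distr sets_left_haar emeasure_left_haar_translate)
qed simp

lemma AE_left_haar_translate:
  assumes "AE x in M. P x"
  shows "AE t in M. P (g + t)"
proof -
  have "AE x in distr M M ((+) g). P x"
    using assms unfolding distr_left_haar_translate .
  then show ?thesis
    by (rule AE_distrD[OF measurable_left_haar_translate])
qed

lemma nn_integral_left_haar_translate:
  assumes "u \<in> borel_measurable borel"
  shows "(\<integral>\<^sup>+ t. u (g + t) \<partial>M) = (\<integral>\<^sup>+ y. u y \<partial>M)"
proof -
  have "u \<in> borel_measurable (distr M M ((+) g))"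
    using assms unfolding distr_left_haar_translate measurable_left_haar_iff .
  from nn_integral_distr[OF measurable_left_haar_translate this]
  show ?thesis
    unfolding distr_left_haar_translate by (rule sym)
qed

lemma sigma_finite_left_haar:
  assumes "sigma_compact_group TYPE('g)"
  shows "sigma_finite_measure M"
proof
  obtain K :: "nat \<Rightarrow> 'g set" where K: "\<And>n. compact (K n)" "(\<Union>n. K n) = UNIV"
    using sigma_compact_groupE[OF assms] by blast
  have "K n \<in> sets M" for n
    unfolding sets_left_haar using K(1) by (rule borel_compact)
  moreover have "emeasure M (K n) \<noteq> \<infinity>" for n
    using emeasure_left_haar_compact[OF K(1)] by (simp add: less_top)
  ultimately show "\<exists>A. countable A \<and> A \<subseteq> sets M \<and> \<Union> A = space M \<and> (\<forall>a\<in>A. emeasure M a \<noteq> \<infinity>)"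
    using K(2) by (intro exI[of _ "range K"]) (auto simp: space_left_haar)
qed

lemma nn_integral_compact_sum_translates_le:
  fixes u :: "'g \<Rightarrow> ennreal"
  assumes sc: "sigma_compact_group TYPE('g)" and H: "discrete_subgroup H" and "compact C"
    and [measurable]: "u \<in> borel_measurable borel"
  obtains m :: nat where
    "(\<integral>\<^sup>+ t\<in>C. (\<integral>\<^sup>+ h. u (h + t) \<partial>count_space H) \<partial>M) \<le> of_nat m * (\<integral>\<^sup>+ y. u y \<partial>M)"
proof -
  have [measurable]: "C \<in> sets borel"
    using \<open>compact C\<close> by (rule borel_compact)
  have "compact (uminus ` C)"
    by (rule compact_continuous_image[OF _ \<open>compact C\<close>]) (intro continuous_intros)
  then obtain m where fin: "\<And>y. finite (H \<inter> (+) y ` uminus ` C)"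
    and card: "\<And>y. card (H \<inter> (+) y ` uminus ` C) \<le> m"
    using discrete_subgroup_card_translate_bounded[OF H] by blast
  interpret M: sigma_finite_measure M
    using sigma_finite_left_haar[OF sc] .
  have countable: "countable H"
    using countable_discrete_subgroup[OF sc H] .
  interpret pair_sigma_finite "count_space H" M
    unfolding pair_sigma_finite_def
    using sigma_finite_measure_count_space_countable[OF countable]
      M.sigma_finite_measure_axioms by blast
  have count: "(\<integral>\<^sup>+ h. indicator C (- h + y) \<partial>count_space H) \<le> of_nat m" for y
  proof -
    have "- h + y \<in> C \<longleftrightarrow> h \<in> (+) y ` uminus ` C" for h
    proof
      assume "- h + y \<in> C"
      moreover have "h = y + - (- h + y)"
        by (simp add: minus_add)
      ultimately show "h \<in> (+) y ` uminus ` C"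
        by blast
    next
      assume "h \<in> (+) y ` uminus ` C"
      then obtain c where "c \<in> C" "h = y + - c"
        by blast
      then show "- h + y \<in> C"
        by (simp add: minus_add add.assoc)
    qed
    then have "(\<integral>\<^sup>+ h. indicator C (- h + y) \<partial>count_space H)
        = (\<integral>\<^sup>+ h. indicator (H \<inter> (+) y ` uminus ` C) h \<partial>count_space H)"
      by (intro nn_integral_cong) (simp add: indicator_def)
    also have "\<dots> = of_nat (card (H \<inter> (+) y ` uminus ` C))"
      using fin[of y] by simp
    finally show ?thesis
      using card[of y] by simp
  qed
  have shift: "(\<integral>\<^sup>+ t. u (h + t) * indicator C t \<partial>M) = (\<integral>\<^sup>+ y. u y * indicator C (- h + y) \<partial>M)" for h
    using nn_integral_left_haar_translate[of "\<lambda>y. u y * indicator C (- h + y)" h]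
    by (simp only: minus_add_cancel) measurable
  have meas_before: "case_prod (\<lambda>h t. u (h + t) * indicator C t) \<in> borel_measurable (count_space H \<Otimes>\<^sub>M M)"
    by (rule measurable_pair_measure_countable1[OF countable]) (simp add: measurable_left_haar_iff)
  have meas_after: "case_prod (\<lambda>h y. u y * indicator C (- h + y)) \<in> borel_measurable (count_space H \<Otimes>\<^sub>M M)"
    by (rule measurable_pair_measure_countable1[OF countable]) (simp add: measurable_left_haar_iff)
  have "(\<integral>\<^sup>+ t\<in>C. (\<integral>\<^sup>+ h. u (h + t) \<partial>count_space H) \<partial>M)
      = (\<integral>\<^sup>+ t. (\<integral>\<^sup>+ h. u (h + t) * indicator C t \<partial>count_space H) \<partial>M)"
    by (intro nn_integral_cong nn_integral_multc[symmetric]) simp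
  also have "\<dots> = (\<integral>\<^sup>+ h. (\<integral>\<^sup>+ t. u (h + t) * indicator C t \<partial>M) \<partial>count_space H)"
    using Fubini'[OF meas_before] .
  also have "\<dots> = (\<integral>\<^sup>+ h. (\<integral>\<^sup>+ y. u y * indicator C (- h + y) \<partial>M) \<partial>count_space H)"
    by (intro nn_integral_cong shift)
  also have "\<dots> = (\<integral>\<^sup>+ y. (\<integral>\<^sup>+ h. u y * indicator C (- h + y) \<partial>count_space H) \<partial>M)"
    using Fubini'[OF meas_after] by simp
  also have "\<dots> = (\<integral>\<^sup>+ y. u y * (\<integral>\<^sup>+ h. indicator C (- h + y) \<partial>count_space H) \<partial>M)"
    by (intro nn_integral_cong nn_integral_cmult) simp
  also have "\<dots> \<le> (\<integral>\<^sup>+ y. u y * of_nat m \<partial>M)"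
    by (intro nn_integral_mono mult_left_mono count) simp
  also have "\<dots> = of_nat m * (\<integral>\<^sup>+ y. u y \<partial>M)"
    by (subst nn_integral_multc) (simp_all add: measurable_left_haar_iff mult.commute)
  finally show ?thesis
    by (rule that)
qed

lemma AE_in_l2_translate_restriction:
  assumes sc: "sigma_compact_group TYPE('g)" and H: "discrete_subgroup H" and f: "in_L2 M f"
  shows "AE t in M. in_l2 H (\<lambda>x. if x \<in> H then f (x + t) else 0)"
proof -
  define \<Psi> where "\<Psi> t = (\<integral>\<^sup>+ h. ennreal ((cmod (f (h + t)))\<^sup>2) \<partial>count_space H)" for t
  obtain K :: "nat \<Rightarrow> 'g set" where K: "\<And>n. compact (K n)" "(\<Union>n. K n) = UNIV"
    using sigma_compact_groupE[OF sc] by blast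
  have [measurable]: "f \<in> borel_measurable borel"
    using f unfolding in_L2_def measurable_left_haar_iff by (rule conjunct1)
  have norm: "(\<integral>\<^sup>+ y. ennreal ((cmod (f y))\<^sup>2) \<partial>M) < \<infinity>"
    using f unfolding in_L2_def integrable_iff_bounded by simp
  have [measurable]: "K n \<in> sets M" for n
    unfolding sets_left_haar using K(1) by (rule borel_compact)
  have [measurable]: "\<Psi> \<in> borel_measurable M"
    unfolding \<Psi>_def measurable_left_haar_iff
    using countable_discrete_subgroup[OF sc H] by (rule borel_measurable_nn_integral_translates) measurable
  have "AE t in M. t \<in> K n \<longrightarrow> \<Psi> t \<noteq> \<infinity>" for n
  proof -
    obtain m where "(\<integral>\<^sup>+ t\<in>K n. \<Psi> t \<partial>M) \<le> of_nat m * (\<integral>\<^sup>+ y. ennreal ((cmod (f y))\<^sup>2) \<partial>M)"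
      unfolding \<Psi>_def
      by (rule nn_integral_compact_sum_translates_le[OF sc H K(1), of "\<lambda>y. ennreal ((cmod (f y))\<^sup>2)"])
        measurable
    also have "\<dots> < \<infinity>"
      using norm by (simp add: ennreal_mult_less_top of_nat_less_top)
    finally have "(\<integral>\<^sup>+ t. \<Psi> t * indicator (K n) t \<partial>M) \<noteq> \<infinity>"
      by simp
    then have "AE t in M. \<Psi> t * indicator (K n) t \<noteq> \<infinity>"
      by (intro nn_integral_PInf_AE) measurable
    then show ?thesis
      by eventually_elim (auto simp: indicator_def)
  qed
  then have "AE t in M. \<forall>n. t \<in> K n \<longrightarrow> \<Psi> t \<noteq> \<infinity>"
    by (rule AE_all_countable[THEN iffD2, rule_format])
  then show ?thesis
  proof (rule eventually_mono)
    fix t assume "\<forall>n. t \<in> K n \<longrightarrow> \<Psi> t \<noteq> \<infinity>"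
    moreover obtain n where "t \<in> K n"
      using K(2) by blast
    ultimately have "\<Psi> t < \<infinity>"
      by (auto simp: less_top)
    moreover have "(\<integral>\<^sup>+ x. ennreal ((cmod (if x \<in> H then f (x + t) else 0))\<^sup>2) \<partial>count_space H) = \<Psi> t"
      unfolding \<Psi>_def by (intro nn_integral_cong) simp
    ultimately show "in_l2 H (\<lambda>x. if x \<in> H then f (x + t) else 0)"
      by (intro in_l2I) (simp, simp only:)
  qed
qed

end

theorem proposition5p3:
  fixes M :: "'g::{topological_group_add, t2_space} measure"
    and H :: "'g set" and c :: "'g \<Rightarrow> complex" and f :: "'g \<Rightarrow> complex"
  assumes "locally_compact_space (euclidean :: 'g topology)"
    and "sigma_compact_group TYPE('g)"
    and "left_haar_measure M"
    and "discrete_subgroup H"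
    and "finite {h. c h \<noteq> 0}" and "{h. c h \<noteq> 0} \<subseteq> H"
    and "in_L2 M f" and "\<not> (AE x in M. f x = 0)"
    and "AE x in M. (\<Sum>h\<in>{h. c h \<noteq> 0}. c h * f (- h + x)) = 0"
  shows "\<exists>k. in_l2 H k \<and> (\<exists>x\<in>H. k x \<noteq> 0) \<and> (\<forall>g\<in>H. conv_gr H c k g = 0)"
  \<comment> \<open>Local compactness only guarantees that a Haar measure exists; here M is given.\<close>
proof -
  let ?S = "{h. c h \<noteq> 0}"
  define k where "k t = (\<lambda>x. if x \<in> H then f (x + t) else 0)" for t
  have "AE t in M. in_l2 H (k t)"
    unfolding k_def using AE_in_l2_translate_restriction[OF assms(3,2,4,7)] .
  moreover have "AE t in M. \<forall>g\<in>H. (\<Sum>h\<in>?S. c h * f (- h + (g + t))) = 0"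
    using AE_left_haar_translate[OF assms(3,9)] countable_discrete_subgroup[OF assms(2,4)]
    by (simp add: AE_ball_countable)
  ultimately have good: "AE t in M. in_l2 H (k t) \<and> (\<forall>g\<in>H. (\<Sum>h\<in>?S. c h * f (- h + (g + t))) = 0)"
    by (rule eventually_conj)
  have "\<exists>t. f t \<noteq> 0 \<and> in_l2 H (k t) \<and> (\<forall>g\<in>H. (\<Sum>h\<in>?S. c h * f (- h + (g + t))) = 0)"
  proof (rule ccontr)
    assume "\<not> ?thesis"
    with good have "AE t in M. f t = 0"
      by (elim eventually_mono) blast
    with assms(8) show False ..
  qed
  then obtain t where "f t \<noteq> 0" and l2: "in_l2 H (k t)"
    and eq: "\<forall>g\<in>H. (\<Sum>h\<in>?S. c h * f (- h + (g + t))) = 0"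
    by blast
  have "conv_gr H c (k t) g = 0" if "g \<in> H" for g
    using conv_gr_translate_restriction[OF assms(4,5,6) that] eq that unfolding k_def by simp
  moreover have "k t 0 \<noteq> 0" "0 \<in> H"
    using \<open>f t \<noteq> 0\<close> discrete_subgroup_zero[OF assms(4)] by (simp_all add: k_def)
  ultimately show ?thesis
    using l2 by (intro exI[of _ "k t"]) blast
qed

end
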